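(* Let $r\ge1$ and let $f(z_1,\dots,z_r)=\sum_{\ell_1,\dots,\ell_r\ge0}a_{\ell_1,\dots,\ell_r}z_1^{\ell_1}\cdots z_r^{\ell_r}$ be a power series converging on the open polydisk $\{|z_l|<R_l,\ l=1,\dots,r\}$. For $l=1,\dots,r$ let $X_l\in\mathbb{C}^{m\times m}$ have Jordan data (as in the context) with: - distinct eigenvalues $\lambda^{(l)}_1,\dots,\lambda^{(l)}_{K_l}$ satisfying $|\lambda^{(l)}_k|<R_l$; - geometric multiplicities $\alpha^{(G)}_{l,k}$ and block sizes $m^{(l)}_{k,i}$; - projectors $P^{(l)}_{k,i}$ and nilpotents $N^{(l)}_{k,i}$. Define $f(X_1,\dots,X_r)=\sum a_{\ell_1,\dots,\ell_r}X_1^{\ell_1}X_2^{\ell_2}\cdots X_r^{\ell_r}$. Then this series converges, and $$f(X_1,\dots,X_r)=\sum_{k_1,\dots,k_r}\ \sum_{i_1,\dots,i_r}\ \sum_{q_1=0}^{m^{(1)}_{k_1,i_1}-1}\cdots\sum_{q_r=0}^{m^{(r)}_{k_r,i_r}-1}\frac{\partial_{z_1}^{q_1}\cdots\partial_{z_r}^{q_r}f(\lambda^{(1)}_{k_1},\dots,\lambda^{(r)}_{k_r})}{q_1!\cdots q_r!}\,Q^{(1)}_{k_1,i_1,q_1}Q^{(2)}_{k_2,i_2,q_2}\cdots Q^{(r)}_{k_r,i_r,q_r}.$$ Here: - $k_l$ ranges over $1,\dots,K_l$ and $i_l$ over $1,\dots,\alpha^{(G)}_{l,k_l}$; - $Q^{(l)}_{k,i,0}=P^{(l)}_{k,i}$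 and $Q^{(l)}_{k,i,q}=(N^{(l)}_{k,i})^{q}$ for $q\ge1$; - the product of the $Q$'s is the ordered product from $l=1$ to $l=r$. Equivalently, the sum splits into three parts: - a pure projector term ($q_1=\dots=q_r=0$); - mixed terms, in which for each nonempty proper subset $\{\iota_1,\dots,\iota_\kappa\}\subsetneq\{1,\dots,r\}$ the $q_{\iota_j}\ge1$ and the other $q$'s equal $0$; - a pure nilpotent term (all $q_l\ge1$).
   Context: Jordan data. Let $X\in\mathbb{C}^{m\times m}$ have Jordan decomposition $$X=U\Big(\bigoplus_{k=1}^{K}\bigoplus_{i=1}^{\alpha_k^{(G)}}J_{m_{k,i}}(\lambda_k)\Big)U^{-1}.$$ Here: - $U$ is invertible; - $\lambda_1,\dots,\lambda_K$ are the distinct eigenvalues of $X$; - $\alpha_k^{(G)}$ is the geometric multiplicity of $\lambda_k$; - $m_{k,i}\ge 1$ are the Jordan block sizes, and $\alpha_k^{(A)}=\sum_{i}m_{k,i}$ is the algebraic multiplicity of $\lambda_k$; - $J_n(\lambda)=\lambda I_n+\acute J_n$, where $\acute J_n$ is the $n\times n$ matrix with ones on the superdiagonal and zeros elsewhere. Let $I_{k,i}$ (resp. $\acute J_{k,i}$) denote the $m\times m$ block-diagonal matrix, in the same block layout as the Jordan form, whose $(k,i)$ diagonal block is $I_{m_{k,i}}$ (resp. $\acute J_{m_{k,i}}$) and whose other blocks are zero. Define $P_{k,i}=U I_{k,i}U^{-1}$ (projectors) and $N_{k,i}=U\acute J_{k,i}U^{-1}$ (nilpotents). The matrices $X_l$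 need not commute, and the order of factors in $f(X_1,\dots,X_r)$ is as written. *)

theory Defs
  imports "Jordan_Normal_Form.Jordan_Normal_Form" "HOL-Analysis.Infinite_Sum" "HOL-Analysis.Derivative"
begin

text \<open>Multi-indices for r variables (variables indexed 0..r-1), extended by 0.\<close>
definition midx :: "nat \<Rightarrow> (nat \<Rightarrow> nat) set" where
  "midx r = {e. \<forall>l\<ge>r. e l = 0}"

definition pser :: "((nat \<Rightarrow> nat) \<Rightarrow> complex) \<Rightarrow> nat \<Rightarrow> (nat \<Rightarrow> complex) \<Rightarrow> complex" where
  "pser a r z = (\<Sum>\<^sub>\<infinity>e\<in>midx r. a e * (\<Prod>l<r. z l ^ e l))"

definition pdiff :: "nat \<Rightarrow> ((nat \<Rightarrow> complex) \<Rightarrow> complex) \<Rightarrow> (nat \<Rightarrow> complex) \<Rightarrow> complex" where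
  "pdiff l g z = deriv (\<lambda>w. g (z(l := w))) (z l)"

definition pdiffn :: "nat \<Rightarrow> nat \<Rightarrow> ((nat \<Rightarrow> complex) \<Rightarrow> complex) \<Rightarrow> (nat \<Rightarrow> complex) \<Rightarrow> complex" where
  "pdiffn l n g = ((pdiff l) ^^ n) g"

definition mixed_deriv :: "nat \<Rightarrow> (nat \<Rightarrow> nat) \<Rightarrow> ((nat \<Rightarrow> complex) \<Rightarrow> complex) \<Rightarrow> (nat \<Rightarrow> complex) \<Rightarrow> complex" where
  "mixed_deriv r q g = foldr (\<lambda>l h. pdiffn l (q l) h) [0..<r] g"

text \<open>Jordan data: K distinct eigenvalues lam k (k<K), alpha k blocks for eigenvalue k,
  block sizes msz k i (i < alpha k). The block layout is
  (+)_(k<K) (+)_(i<alpha k) J_(msz k i)(lam k).\<close>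
definition block_layout :: "nat \<Rightarrow> (nat \<Rightarrow> nat) \<Rightarrow> (nat \<Rightarrow> nat \<Rightarrow> nat) \<Rightarrow>
    (nat \<Rightarrow> nat \<Rightarrow> complex mat) \<Rightarrow> complex mat" where
  "block_layout K alpha msz B =
     diag_block_mat (concat (map (\<lambda>k. map (\<lambda>i. B k i) [0..<alpha k]) [0..<K]))"

definition jordan_form :: "nat \<Rightarrow> (nat \<Rightarrow> complex) \<Rightarrow> (nat \<Rightarrow> nat) \<Rightarrow> (nat \<Rightarrow> nat \<Rightarrow> nat) \<Rightarrow> complex mat" where
  "jordan_form K lam alpha msz = block_layout K alpha msz (\<lambda>k i. jordan_block (msz k i) (lam k))"

definition blk_id :: "nat \<Rightarrow> (nat \<Rightarrow> nat) \<Rightarrow> (nat \<Rightarrow> nat \<Rightarrow> nat) \<Rightarrow> nat \<Rightarrow> nat \<Rightarrow> complex mat" where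
  "blk_id K alpha msz k0 i0 = block_layout K alpha msz
     (\<lambda>k i. if (k, i) = (k0, i0) then 1\<^sub>m (msz k i) else 0\<^sub>m (msz k i) (msz k i))"

definition blk_nil :: "nat \<Rightarrow> (nat \<Rightarrow> nat) \<Rightarrow> (nat \<Rightarrow> nat \<Rightarrow> nat) \<Rightarrow> nat \<Rightarrow> nat \<Rightarrow> complex mat" where
  "blk_nil K alpha msz k0 i0 = block_layout K alpha msz
     (\<lambda>k i. if (k, i) = (k0, i0) then jordan_block (msz k i) 0 else 0\<^sub>m (msz k i) (msz k i))"

definition ord_prod :: "nat \<Rightarrow> nat \<Rightarrow> (nat \<Rightarrow> complex mat) \<Rightarrow> complex mat" where
  "ord_prod m r A = foldr (\<lambda>l B. A l * B) [0..<r] (1\<^sub>m m)"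

end

theory Submission
  imports Defs
begin

text \<open>
  Each \<open>X\<^sub>l\<close> is similar to its Jordan form, and on a Jordan block of size \<open>n\<close> the binomial
  theorem gives \<open>(\<lambda> I + N) ^ e = (\<Sum>q<n. (e choose q) \<lambda> ^ (e - q) N ^ q)\<close> because \<open>N ^ n = 0\<close>.
  So \<open>X\<^sub>l ^ e\<close> is a finite linear combination of the matrices \<open>Q\<^sub>k\<^sub>,\<^sub>i\<^sub>,\<^sub>q\<close> with coefficients
  \<open>(e choose q) \<lambda>\<^sub>k ^ (e - q)\<close>, and the ordered product \<open>X\<^sub>1 ^ e\<^sub>1 \<dots> X\<^sub>r ^ e\<^sub>r\<close> multiplies out into
  a finite sum, over all choices of \<open>(k\<^sub>l, i\<^sub>l, q\<^sub>l)\<close>, of ordered products of \<open>Q\<close>'s. The weight of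
  such a product is \<open>\<Sum>\<^sub>e a\<^sub>e \<Prod>\<^sub>l (e\<^sub>l choose q\<^sub>l) z\<^sub>l ^ (e\<^sub>l - q\<^sub>l)\<close> at \<open>z\<^sub>l = \<lambda>\<^sub>k\<^sub>l\<close>, which is
  \<open>\<partial>\<^sup>q f(z) / q!\<close> by termwise differentiation of the power series inside its polydisc of
  convergence. Everything is done entrywise, so the series is a finite sum of convergent series.
\<close>

section \<open>Finite linear combinations of matrices\<close>

definition mat_lincomb ::
    "nat \<Rightarrow> nat \<Rightarrow> 'i set \<Rightarrow> ('i \<Rightarrow> 'a::comm_semiring_1) \<Rightarrow> ('i \<Rightarrow> 'a mat) \<Rightarrow> 'a mat" where
  "mat_lincomb nr nc I c B = Matrix.mat nr nc (\<lambda>ij. \<Sum>i\<in>I. c i * B i $$ ij)"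

lemma mat_lincomb_carrier [simp]: "mat_lincomb nr nc I c B \<in> carrier_mat nr nc"
  by (simp add: mat_lincomb_def)

lemma index_mat_lincomb [simp]:
  "i < nr \<Longrightarrow> j < nc \<Longrightarrow> mat_lincomb nr nc I c B $$ (i, j) = (\<Sum>t\<in>I. c t * B t $$ (i, j))"
  "dim_row (mat_lincomb nr nc I c B) = nr" "dim_col (mat_lincomb nr nc I c B) = nc"
  by (simp_all add: mat_lincomb_def)

lemma mat_lincomb_singleton: "A \<in> carrier_mat nr nc \<Longrightarrow> mat_lincomb nr nc {()} (\<lambda>_. 1) (\<lambda>_. A) = A"
  by (intro eq_matI) auto

lemma mat_lincomb_reindex_bij_betw:
  assumes "bij_betw h I J"
  shows "mat_lincomb nr nc J c B = mat_lincomb nr nc I (c \<circ> h) (B \<circ> h)"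
proof (rule eq_matI)
  fix i j assume "i < dim_row (mat_lincomb nr nc I (c \<circ> h) (B \<circ> h))" "j < dim_col (mat_lincomb nr nc I (c \<circ> h) (B \<circ> h))"
  thus "mat_lincomb nr nc J c B $$ (i, j) = mat_lincomb nr nc I (c \<circ> h) (B \<circ> h) $$ (i, j)"
    using sum.reindex_bij_betw[OF assms, of "\<lambda>t. c t * B t $$ (i, j)"] by simp
qed simp_all

lemma mult_mat_lincomb:
  assumes "\<And>s. s \<in> S \<Longrightarrow> A s \<in> carrier_mat nr n" and "\<And>t. t \<in> T \<Longrightarrow> B t \<in> carrier_mat n nc"
  shows "mat_lincomb nr n S c A * mat_lincomb n nc T d B
       = mat_lincomb nr nc (S \<times> T) (\<lambda>(s, t). c s * d t) (\<lambda>(s, t). A s * B t)"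
proof (rule eq_matI)
  fix i j assume "i < dim_row (mat_lincomb nr nc (S \<times> T) (\<lambda>(s, t). c s * d t) (\<lambda>(s, t). A s * B t))"
    and "j < dim_col (mat_lincomb nr nc (S \<times> T) (\<lambda>(s, t). c s * d t) (\<lambda>(s, t). A s * B t))"
  hence i: "i < nr" and j: "j < nc" by simp_all
  have "(mat_lincomb nr n S c A * mat_lincomb n nc T d B) $$ (i, j)
      = (\<Sum>k<n. (\<Sum>s\<in>S. c s * A s $$ (i, k)) * (\<Sum>t\<in>T. d t * B t $$ (k, j)))"
    using i j by (simp add: scalar_prod_def atLeast0LessThan)
  also have "\<dots> = (\<Sum>k<n. \<Sum>s\<in>S. \<Sum>t\<in>T. c s * d t * (A s $$ (i, k) * B t $$ (k, j)))"
    by (simp add: sum_product algebra_simps)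
  also have "\<dots> = (\<Sum>s\<in>S. \<Sum>t\<in>T. \<Sum>k<n. c s * d t * (A s $$ (i, k) * B t $$ (k, j)))"
    by (subst sum.swap, rule sum.cong, simp, rule sum.swap)
  also have "\<dots> = (\<Sum>s\<in>S. \<Sum>t\<in>T. c s * d t * (\<Sum>k<n. A s $$ (i, k) * B t $$ (k, j)))"
    by (simp add: sum_distrib_left)
  also have "\<dots> = (\<Sum>(s, t)\<in>S \<times> T. c s * d t * (A s * B t) $$ (i, j))"
    unfolding sum.cartesian_product[symmetric]
  proof (intro sum.cong refl)
    fix s t assume "s \<in> S" "t \<in> T"
    with assms have "A s \<in> carrier_mat nr n" "B t \<in> carrier_mat n nc" by auto
    with i j show "c s * d t * (\<Sum>k<n. A s $$ (i, k) * B t $$ (k, j)) = c s * d t * (A s * B t) $$ (i, j)"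
      by (simp add: scalar_prod_def atLeast0LessThan)
  qed
  finally show "(mat_lincomb nr n S c A * mat_lincomb n nc T d B) $$ (i, j)
      = mat_lincomb nr nc (S \<times> T) (\<lambda>(s, t). c s * d t) (\<lambda>(s, t). A s * B t) $$ (i, j)"
    using i j by (simp add: case_prod_beta')
qed simp_all

lemma mult_mat_lincomb_left:
  assumes "U \<in> carrier_mat nr n" and "\<And>t. t \<in> T \<Longrightarrow> B t \<in> carrier_mat n nc"
  shows "U * mat_lincomb n nc T c B = mat_lincomb nr nc T c (\<lambda>t. U * B t)"
proof -
  have "U * mat_lincomb n nc T c B = mat_lincomb nr n {()} (\<lambda>_. 1) (\<lambda>_. U) * mat_lincomb n nc T c B"
    using assms by (simp add: mat_lincomb_singleton)
  also have "\<dots> = mat_lincomb nr nc ({()} \<times> T) (c \<circ> snd) (\<lambda>t. U * B (snd t))"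
    using assms by (simp add: mult_mat_lincomb split_def o_def)
  also have "\<dots> = mat_lincomb nr nc T c (\<lambda>t. U * B t)"
    using mat_lincomb_reindex_bij_betw[of snd "{()} \<times> T" T nr nc c "\<lambda>t. U * B t"]
    by (simp add: bij_betw_def inj_on_def o_def)
  finally show ?thesis .
qed

lemma mult_mat_lincomb_right:
  assumes "V \<in> carrier_mat n nc" and "\<And>t. t \<in> T \<Longrightarrow> B t \<in> carrier_mat nr n"
  shows "mat_lincomb nr n T c B * V = mat_lincomb nr nc T c (\<lambda>t. B t * V)"
proof -
  have "mat_lincomb nr n T c B * V = mat_lincomb nr n T c B * mat_lincomb n nc {()} (\<lambda>_. 1) (\<lambda>_. V)"
    using assms by (simp add: mat_lincomb_singleton)
  also have "\<dots> = mat_lincomb nr nc (T \<times> {()}) (c \<circ> fst) (\<lambda>t. B (fst t) * V)"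
    using assms by (simp add: mult_mat_lincomb split_def o_def)
  also have "\<dots> = mat_lincomb nr nc T c (\<lambda>t. B t * V)"
    using mat_lincomb_reindex_bij_betw[of fst "T \<times> {()}" T nr nc c "\<lambda>t. B t * V"]
    by (simp add: bij_betw_def inj_on_def o_def)
  finally show ?thesis .
qed

lemma mat_lincomb_if_zero:
  assumes "finite T"
  shows "mat_lincomb n n T c (\<lambda>t. if P t then B t else 0\<^sub>m n n) = mat_lincomb n n {t \<in> T. P t} c B"
proof (rule eq_matI)
  fix i j assume "i < dim_row (mat_lincomb n n {t \<in> T. P t} c B)" "j < dim_col (mat_lincomb n n {t \<in> T. P t} c B)"
  hence "i < n" "j < n" by simp_all
  hence "c t * (if P t then B t else 0\<^sub>m n n) $$ (i, j) = (if P t then c t * B t $$ (i, j) else 0)" for t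
    by simp
  with \<open>i < n\<close> \<open>j < n\<close> show "mat_lincomb n n T c (\<lambda>t. if P t then B t else 0\<^sub>m n n) $$ (i, j)
      = mat_lincomb n n {t \<in> T. P t} c B $$ (i, j)"
    by (simp add: sum.inter_filter[OF assms, symmetric])
qed simp_all

text \<open>Like \<open>Pi\<^sub>E I T\<close>, but with the prescribed value \<open>d\<close> instead of \<open>undefined\<close> outside \<open>I\<close>.\<close>
definition Pi_dflt :: "'i set \<Rightarrow> ('i \<Rightarrow> 'b set) \<Rightarrow> 'b \<Rightarrow> ('i \<Rightarrow> 'b) set" where
  "Pi_dflt I T d = {\<tau>. (\<forall>l\<in>I. \<tau> l \<in> T l) \<and> (\<forall>l. l \<notin> I \<longrightarrow> \<tau> l = d)}"

lemma Pi_dflt_empty [simp]: "Pi_dflt {} T d = {\<lambda>_. d}"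
  by (auto simp: Pi_dflt_def)

lemma finite_Pi_dflt:
  assumes "finite I" "\<And>l. l \<in> I \<Longrightarrow> finite (T l)"
  shows "finite (Pi_dflt I T d)"
proof -
  have "Pi_dflt I T d \<subseteq> (\<lambda>\<tau> l. if l \<in> I then \<tau> l else d) ` Pi\<^sub>E I T"
  proof
    fix \<tau> assume "\<tau> \<in> Pi_dflt I T d"
    hence "\<tau> = (\<lambda>l. if l \<in> I then restrict \<tau> I l else d)" "restrict \<tau> I \<in> Pi\<^sub>E I T"
      by (auto simp: Pi_dflt_def)
    thus "\<tau> \<in> (\<lambda>\<tau> l. if l \<in> I then \<tau> l else d) ` Pi\<^sub>E I T" by blast
  qed
  thus ?thesis using assms by (meson finite_PiE finite_imageI finite_subset)
qed

lemma bij_betw_Pi_dflt_insert: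
  assumes "x \<notin> I"
  shows "bij_betw (\<lambda>(t, \<tau>). \<tau>(x := t)) (T x \<times> Pi_dflt I T d) (Pi_dflt (insert x I) T d)"
  by (rule bij_betw_byWitness[where f' = "\<lambda>\<tau>. (\<tau> x, \<tau>(x := d))"]) (use assms in \<open>auto simp: Pi_dflt_def\<close>)

lemma foldr_mult_carrier_mat:
  "(\<And>l. l \<in> set L \<Longrightarrow> A l \<in> carrier_mat n n) \<Longrightarrow> foldr (\<lambda>l M. A l * M) L (1\<^sub>m n) \<in> carrier_mat n n"
  by (induction L) (auto intro!: mult_carrier_mat)

lemma foldr_mult_mat_lincomb:
  assumes "distinct L" and fin: "\<And>l. l \<in> set L \<Longrightarrow> finite (T l)"
    and B: "\<And>l t. l \<in> set L \<Longrightarrow> t \<in> T l \<Longrightarrow> B l t \<in> carrier_mat n n"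
  shows "foldr (\<lambda>l M. mat_lincomb n n (T l) (c l) (B l) * M) L (1\<^sub>m n)
    = mat_lincomb n n (Pi_dflt (set L) T d) (\<lambda>\<tau>. \<Prod>l\<in>set L. c l (\<tau> l))
        (\<lambda>\<tau>. foldr (\<lambda>l M. B l (\<tau> l) * M) L (1\<^sub>m n))"
  using assms
proof (induction L)
  case Nil
  show ?case by (intro eq_matI) auto
next
  case (Cons x L)
  hence x: "x \<notin> set L" by simp
  let ?P = "\<lambda>\<tau>. foldr (\<lambda>l M. B l (\<tau> l) * M) L (1\<^sub>m n)"
  have P: "?P \<tau> \<in> carrier_mat n n" if "\<tau> \<in> Pi_dflt (set L) T d" for \<tau>
    using that Cons.prems by (intro foldr_mult_carrier_mat) (auto simp: Pi_dflt_def)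
  have "foldr (\<lambda>l M. mat_lincomb n n (T l) (c l) (B l) * M) (x # L) (1\<^sub>m n)
      = mat_lincomb n n (T x) (c x) (B x) *
        mat_lincomb n n (Pi_dflt (set L) T d) (\<lambda>\<tau>. \<Prod>l\<in>set L. c l (\<tau> l)) ?P"
    using Cons by simp
  also have "\<dots> = mat_lincomb n n (T x \<times> Pi_dflt (set L) T d)
      (\<lambda>(t, \<tau>). c x t * (\<Prod>l\<in>set L. c l (\<tau> l))) (\<lambda>(t, \<tau>). B x t * ?P \<tau>)"
    using Cons.prems P by (intro mult_mat_lincomb) auto
  also have "\<dots> = mat_lincomb n n (T x \<times> Pi_dflt (set L) T d)
      ((\<lambda>\<tau>. \<Prod>l\<in>set (x # L). c l (\<tau> l)) \<circ> (\<lambda>(t, \<tau>). \<tau>(x := t)))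
      ((\<lambda>\<tau>. foldr (\<lambda>l M. B l (\<tau> l) * M) (x # L) (1\<^sub>m n)) \<circ> (\<lambda>(t, \<tau>). \<tau>(x := t)))"
  proof -
    have "(\<Prod>l\<in>set L. c l ((\<tau>(x := t)) l)) = (\<Prod>l\<in>set L. c l (\<tau> l))"
      "?P (\<tau>(x := t)) = ?P \<tau>" for t \<tau>
      using x by (auto intro!: prod.cong foldr_cong)
    thus ?thesis using x by (simp add: o_def case_prod_beta')
  qed
  also have "\<dots> = mat_lincomb n n (Pi_dflt (set (x # L)) T d) (\<lambda>\<tau>. \<Prod>l\<in>set (x # L). c l (\<tau> l))
      (\<lambda>\<tau>. foldr (\<lambda>l M. B l (\<tau> l) * M) (x # L) (1\<^sub>m n))"
    unfolding list.set(2) by (rule mat_lincomb_reindex_bij_betw[OF bij_betw_Pi_dflt_insert[OF x], symmetric])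
  finally show ?case .
qed

lemma ord_prod_cong: "(\<And>l. l < r \<Longrightarrow> A l = B l) \<Longrightarrow> ord_prod m r A = ord_prod m r B"
  unfolding ord_prod_def by (intro foldr_cong) auto

lemma ord_prod_mat_lincomb:
  assumes "\<And>l. l < r \<Longrightarrow> finite (T l)" and "\<And>l t. l < r \<Longrightarrow> t \<in> T l \<Longrightarrow> B l t \<in> carrier_mat m m"
  shows "ord_prod m r (\<lambda>l. mat_lincomb m m (T l) (c l) (B l))
    = mat_lincomb m m (Pi_dflt {..<r} T d) (\<lambda>\<tau>. \<Prod>l<r. c l (\<tau> l)) (\<lambda>\<tau>. ord_prod m r (\<lambda>l. B l (\<tau> l)))"
  unfolding ord_prod_def using foldr_mult_mat_lincomb[of "[0..<r]" T B m c d] assms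
  by (simp add: atLeast0LessThan)

section \<open>Block diagonal matrices\<close>

lemma diag_block_mat_carrier:
  assumes "\<And>y. y \<in> set L \<Longrightarrow> F y \<in> carrier_mat (sz y) (sz y)"
  shows "diag_block_mat (map F L) \<in> carrier_mat (\<Sum>y\<leftarrow>L. sz y) (\<Sum>y\<leftarrow>L. sz y)"
  using assms by (induction L) (auto simp: Let_def)

lemma index_diag_block_mat_Cons:
  assumes "A \<in> carrier_mat n n" "diag_block_mat As \<in> carrier_mat N N" "p < n + N" "s < n + N"
  shows "diag_block_mat (A # As) $$ (p, s) = (if p < n then if s < n then A $$ (p, s) else 0
           else if s < n then 0 else diag_block_mat As $$ (p - n, s - n))"
  using assms by (auto simp: Let_def)

lemma diag_block_mat_lincomb:
  assumes "\<And>t y. t \<in> I \<Longrightarrow> y \<in> set L \<Longrightarrow> G t y \<in> carrier_mat (sz y) (sz y)"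
  shows "diag_block_mat (map (\<lambda>y. mat_lincomb (sz y) (sz y) I c (\<lambda>t. G t y)) L)
    = mat_lincomb (\<Sum>y\<leftarrow>L. sz y) (\<Sum>y\<leftarrow>L. sz y) I c (\<lambda>t. diag_block_mat (map (G t) L))"
  using assms
proof (induction L)
  case Nil
  show ?case by (intro eq_matI) auto
next
  case (Cons x L)
  let ?n = "sz x" and ?N = "\<Sum>y\<leftarrow>L. sz y"
  let ?D = "diag_block_mat (map (\<lambda>y. mat_lincomb (sz y) (sz y) I c (\<lambda>t. G t y)) L)"
  have IH: "?D = mat_lincomb ?N ?N I c (\<lambda>t. diag_block_mat (map (G t) L))"
    using Cons by simp
  have G: "G t x \<in> carrier_mat ?n ?n" "diag_block_mat (map (G t) L) \<in> carrier_mat ?N ?N" if "t \<in> I" for t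
    using that Cons.prems by (auto intro!: diag_block_mat_carrier)
  show ?case
  proof (rule eq_matI)
    fix p s
    assume "p < dim_row (mat_lincomb (\<Sum>y\<leftarrow>x # L. sz y) (\<Sum>y\<leftarrow>x # L. sz y) I c (\<lambda>t. diag_block_mat (map (G t) (x # L))))"
      and "s < dim_col (mat_lincomb (\<Sum>y\<leftarrow>x # L. sz y) (\<Sum>y\<leftarrow>x # L. sz y) I c (\<lambda>t. diag_block_mat (map (G t) (x # L))))"
    hence ps: "p < ?n + ?N" "s < ?n + ?N" by simp_all
    have "mat_lincomb (?n + ?N) (?n + ?N) I c (\<lambda>t. diag_block_mat (map (G t) (x # L))) $$ (p, s)
        = (\<Sum>t\<in>I. c t * (if p < ?n then if s < ?n then G t x $$ (p, s) else 0
             else if s < ?n then 0 else diag_block_mat (map (G t) L) $$ (p - ?n, s - ?n)))"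
      using ps
    proof (simp del: diag_block_mat.simps, intro sum.cong refl)
      fix t assume "t \<in> I"
      from index_diag_block_mat_Cons[OF G[OF this] ps]
      show "c t * diag_block_mat (G t x # map (G t) L) $$ (p, s) = c t * (if p < ?n then if s < ?n then G t x $$ (p, s) else 0
             else if s < ?n then 0 else diag_block_mat (map (G t) L) $$ (p - ?n, s - ?n))" by simp
    qed
    moreover have "?D \<in> carrier_mat ?N ?N" unfolding IH by simp
    note index_diag_block_mat_Cons[OF mat_lincomb_carrier this ps]
    ultimately show "diag_block_mat (map (\<lambda>y. mat_lincomb (sz y) (sz y) I c (\<lambda>t. G t y)) (x # L)) $$ (p, s)
        = mat_lincomb (\<Sum>y\<leftarrow>x # L. sz y) (\<Sum>y\<leftarrow>x # L. sz y) I c (\<lambda>t. diag_block_mat (map (G t) (x # L))) $$ (p, s)"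
      using ps by (cases "p < ?n"; cases "s < ?n")
        (simp_all add: index_diag_block_mat_Cons IH del: diag_block_mat.simps)
  qed (simp_all add: dim_diag_block_mat o_def)
qed

text \<open>The binomial theorem for \<open>a I + N\<close> with \<open>N\<^sup>n = 0\<close>.\<close>
lemma jordan_block_pow_lincomb:
  "jordan_block n (a::'a::comm_ring_1) ^\<^sub>m e
     = mat_lincomb n n {..<n} (\<lambda>q. of_nat (e choose q) * a ^ (e - q)) (\<lambda>q. jordan_block n 0 ^\<^sub>m q)"
proof (rule eq_matI)
  fix i j assume "i < dim_row (mat_lincomb n n {..<n} (\<lambda>q. of_nat (e choose q) * a ^ (e - q)) (\<lambda>q. jordan_block n 0 ^\<^sub>m q))"
    and "j < dim_col (mat_lincomb n n {..<n} (\<lambda>q. of_nat (e choose q) * a ^ (e - q)) (\<lambda>q. jordan_block n 0 ^\<^sub>m q))"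
  hence i: "i < n" and j: "j < n" by simp_all
  hence ji: "j - i < n" by simp
  have N: "(jordan_block n (0::'a) ^\<^sub>m q) $$ (i, j) = (if i \<le> j \<and> q = j - i then 1 else 0)" for q
    using i j by (auto simp: jordan_block_pow binomial_eq_0 power_0_left)
  have "mat_lincomb n n {..<n} (\<lambda>q. of_nat (e choose q) * a ^ (e - q)) (\<lambda>q. jordan_block n 0 ^\<^sub>m q) $$ (i, j)
      = (if i \<le> j then of_nat (e choose (j - i)) * a ^ (e - (j - i)) else 0)"
    using i j ji by (simp add: N if_distrib[of "\<lambda>x. _ * x"] sum.delta cong: if_cong)
  also have "\<dots> = (jordan_block n a ^\<^sub>m e) $$ (i, j)"
    using i j by (auto simp: jordan_block_pow binomial_eq_0 Suc_diff_le)
  finally show "(jordan_block n a ^\<^sub>m e) $$ (i, j) = mat_lincomb n n {..<n} (\<lambda>q. of_nat (e choose q) * a ^ (e - q)) (\<lambda>q. jordan_block n 0 ^\<^sub>m q) $$ (i, j)" ..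
qed simp_all

section \<open>Powers of a matrix in Jordan form\<close>

definition block_indices :: "nat \<Rightarrow> (nat \<Rightarrow> nat) \<Rightarrow> (nat \<times> nat) list" where
  "block_indices K alpha = concat (map (\<lambda>k. map (Pair k) [0..<alpha k]) [0..<K])"

lemma block_layout_eq_diag_block_mat:
  "block_layout K alpha msz B = diag_block_mat (map (case_prod B) (block_indices K alpha))"
  by (simp add: block_layout_def block_indices_def map_concat o_def)

lemma set_block_indices [simp]: "set (block_indices K alpha) = {(k, i). k < K \<and> i < alpha k}"
  by (auto simp: block_indices_def)

lemma sum_list_block_indices:
  "sum_list (map (case_prod msz) (block_indices K alpha)) = (\<Sum>k<K. \<Sum>i<alpha k. msz k i)"
  by (induction K) (simp_all add: block_indices_def o_def interv_sum_list_conv_sum_set_nat atLeast0LessThan)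

lemma block_layout_cong:
  "(\<And>k i. k < K \<Longrightarrow> i < alpha k \<Longrightarrow> B k i = B' k i) \<Longrightarrow> block_layout K alpha msz B = block_layout K alpha msz B'"
  unfolding block_layout_eq_diag_block_mat by (intro arg_cong[of _ _ diag_block_mat] map_cong) auto

lemma block_layout_pow:
  assumes "\<And>k i. k < K \<Longrightarrow> i < alpha k \<Longrightarrow> B k i \<in> carrier_mat (msz k i) (msz k i)"
  shows "block_layout K alpha msz B ^\<^sub>m e = block_layout K alpha msz (\<lambda>k i. B k i ^\<^sub>m e)"
proof -
  have "Ball (set (map (case_prod B) (block_indices K alpha))) square_mat"
  proof -
    have "square_mat (B k i)" if "k < K" "i < alpha k" for k i
      using assms[OF that] by (simp add: square_mat.simps)
    thus ?thesis by auto
  qed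
  thus ?thesis unfolding block_layout_eq_diag_block_mat
    by (simp add: diag_block_pow_mat o_def case_prod_beta')
qed

lemma block_layout_carrier:
  assumes "(\<Sum>k<K. \<Sum>i<alpha k. msz k i) = m"
    and "\<And>k i. k < K \<Longrightarrow> i < alpha k \<Longrightarrow> B k i \<in> carrier_mat (msz k i) (msz k i)"
  shows "block_layout K alpha msz B \<in> carrier_mat m m"
  unfolding block_layout_eq_diag_block_mat assms(1)[symmetric] sum_list_block_indices[symmetric]
  using assms(2) by (intro diag_block_mat_carrier) auto

lemma block_layout_lincomb:
  assumes "(\<Sum>k<K. \<Sum>i<alpha k. msz k i) = m"
    and "\<And>t k i. t \<in> I \<Longrightarrow> k < K \<Longrightarrow> i < alpha k \<Longrightarrow> G t k i \<in> carrier_mat (msz k i) (msz k i)"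
  shows "block_layout K alpha msz (\<lambda>k i. mat_lincomb (msz k i) (msz k i) I c (\<lambda>t. G t k i))
       = mat_lincomb m m I c (\<lambda>t. block_layout K alpha msz (G t))"
  unfolding block_layout_eq_diag_block_mat assms(1)[symmetric] sum_list_block_indices[symmetric]
  using diag_block_mat_lincomb[of I "block_indices K alpha" "\<lambda>t. case_prod (G t)" "case_prod msz" c] assms(2)
  by (simp add: case_prod_beta')

definition jordan_indices :: "nat \<Rightarrow> (nat \<Rightarrow> nat) \<Rightarrow> (nat \<Rightarrow> nat \<Rightarrow> nat) \<Rightarrow> (nat \<times> nat \<times> nat) set" where
  "jordan_indices K alpha msz = (SIGMA k:{..<K}. SIGMA i:{..<alpha k}. {..<msz k i})"

lemma mem_jordan_indices:
  "t \<in> jordan_indices K alpha msz \<longleftrightarrow> fst t < K \<and> fst (snd t) < alpha (fst t) \<and> snd (snd t) < msz (fst t) (fst (snd t))"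
  by (cases t) (auto simp: jordan_indices_def)

lemma finite_jordan_indices [simp]: "finite (jordan_indices K alpha msz)"
  by (simp add: jordan_indices_def)

lemma zero_pow_mat: "0 < q \<Longrightarrow> (0\<^sub>m n n :: 'a::semiring_1 mat) ^\<^sub>m q = 0\<^sub>m n n"
  by (induction q) (auto simp: gr0_conv_Suc)

lemma conj_pow_mat:
  assumes "U \<in> carrier_mat n n" "V \<in> carrier_mat n n" "U * V = 1\<^sub>m n" "V * U = 1\<^sub>m n" "A \<in> carrier_mat n n"
  shows "(U * A * V) ^\<^sub>m e = U * A ^\<^sub>m e * V"
  using assms by (intro similar_mat_wit_pow_id) (auto simp: similar_mat_wit_def Let_def)

definition blk_nil_pow :: "nat \<Rightarrow> (nat \<Rightarrow> nat) \<Rightarrow> (nat \<Rightarrow> nat \<Rightarrow> nat) \<Rightarrow> nat \<Rightarrow> nat \<Rightarrow> nat \<Rightarrow> complex mat" where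
  "blk_nil_pow K alpha msz k0 i0 q = block_layout K alpha msz
     (\<lambda>k i. if (k, i) = (k0, i0) then jordan_block (msz k i) 0 ^\<^sub>m q else 0\<^sub>m (msz k i) (msz k i))"

lemma blk_nil_pow_carrier:
  "(\<Sum>k<K. \<Sum>i<alpha k. msz k i) = m \<Longrightarrow> blk_nil_pow K alpha msz k i q \<in> carrier_mat m m"
  unfolding blk_nil_pow_def by (rule block_layout_carrier) auto

lemma blk_nil_pow_0: "blk_nil_pow K alpha msz k i 0 = blk_id K alpha msz k i"
  unfolding blk_nil_pow_def blk_id_def
proof (rule block_layout_cong)
  fix k' i'
  show "(if (k', i') = (k, i) then jordan_block (msz k' i') 0 ^\<^sub>m 0 else 0\<^sub>m (msz k' i') (msz k' i'))
     = (if (k', i') = (k, i) then 1\<^sub>m (msz k' i') else 0\<^sub>m (msz k' i') (msz k' i'))"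
    by (simp only: pow_mat.simps(1)) simp
qed

lemma blk_nil_pow_pos: "0 < q \<Longrightarrow> blk_nil_pow K alpha msz k i q = blk_nil K alpha msz k i ^\<^sub>m q"
  unfolding blk_nil_pow_def blk_nil_def
  by (subst block_layout_pow) (auto intro!: block_layout_cong simp: zero_pow_mat)

lemma jordan_form_pow:
  assumes "(\<Sum>k<K. \<Sum>i<alpha k. msz k i) = m"
  shows "jordan_form K lam alpha msz ^\<^sub>m e = mat_lincomb m m (jordan_indices K alpha msz)
     (\<lambda>(k, i, q). of_nat (e choose q) * lam k ^ (e - q)) (\<lambda>(k, i, q). blk_nil_pow K alpha msz k i q)"
proof -
  let ?T = "jordan_indices K alpha msz" and ?c = "\<lambda>(k, i, q). of_nat (e choose q) * lam k ^ (e - q)"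
  let ?G = "\<lambda>(k0, i0, q) k i. if (k, i) = (k0, i0) then jordan_block (msz k i) 0 ^\<^sub>m q else 0\<^sub>m (msz k i) (msz k i)"
  have block: "jordan_block (msz k i) (lam k) ^\<^sub>m e = mat_lincomb (msz k i) (msz k i) ?T ?c (\<lambda>t. ?G t k i)"
    if "k < K" "i < alpha k" for k i
  proof -
    let ?n = "msz k i" and ?S = "{t \<in> ?T. (fst t, fst (snd t)) = (k, i)}"
    have bij: "bij_betw (\<lambda>q. (k, i, q)) {..<?n} ?S"
      using that by (auto simp: bij_betw_def inj_on_def jordan_indices_def)
    have "jordan_block ?n (lam k) ^\<^sub>m e
        = mat_lincomb ?n ?n {..<?n} (\<lambda>q. of_nat (e choose q) * lam k ^ (e - q)) (\<lambda>q. jordan_block ?n 0 ^\<^sub>m q)"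
      by (rule jordan_block_pow_lincomb)
    also have "\<dots> = mat_lincomb ?n ?n ?S ?c (\<lambda>t. jordan_block ?n 0 ^\<^sub>m snd (snd t))"
      using mat_lincomb_reindex_bij_betw[OF bij, of ?n ?n ?c "\<lambda>t. jordan_block ?n 0 ^\<^sub>m snd (snd t)"]
      by (simp add: o_def)
    also have "\<dots> = mat_lincomb ?n ?n ?T ?c (\<lambda>t. if (fst t, fst (snd t)) = (k, i)
        then jordan_block ?n 0 ^\<^sub>m snd (snd t) else 0\<^sub>m ?n ?n)"
      by (rule mat_lincomb_if_zero[symmetric]) simp
    also have "\<dots> = mat_lincomb ?n ?n ?T ?c (\<lambda>t. ?G t k i)"
      by (intro arg_cong[where f = "mat_lincomb ?n ?n ?T ?c"] ext) (auto split: prod.split)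
    finally show ?thesis .
  qed
  have "jordan_form K lam alpha msz ^\<^sub>m e = block_layout K alpha msz (\<lambda>k i. jordan_block (msz k i) (lam k) ^\<^sub>m e)"
    unfolding jordan_form_def by (rule block_layout_pow) simp
  also have "\<dots> = block_layout K alpha msz (\<lambda>k i. mat_lincomb (msz k i) (msz k i) ?T ?c (\<lambda>t. ?G t k i))"
    using block by (rule block_layout_cong)
  also have "\<dots> = mat_lincomb m m ?T ?c (\<lambda>t. block_layout K alpha msz (?G t))"
    by (rule block_layout_lincomb[OF assms]) (auto split: prod.split)
  also have "\<dots> = mat_lincomb m m ?T ?c (\<lambda>(k, i, q). blk_nil_pow K alpha msz k i q)"
    by (simp add: blk_nil_pow_def case_prod_beta')
  finally show ?thesis .
qed

definition jordan_part ::
    "complex mat \<Rightarrow> complex mat \<Rightarrow> nat \<Rightarrow> (nat \<Rightarrow> nat) \<Rightarrow> (nat \<Rightarrow> nat \<Rightarrow> nat) \<Rightarrow> nat \<Rightarrow> nat \<Rightarrow> nat \<Rightarrow> complex mat" where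
  "jordan_part U V K alpha msz k i q = (if q = 0 then U * blk_id K alpha msz k i * V
     else (U * blk_nil K alpha msz k i * V) ^\<^sub>m q)"

lemma jordan_part_eq_conj_blk_nil_pow:
  assumes UV: "U \<in> carrier_mat m m" "V \<in> carrier_mat m m" "U * V = 1\<^sub>m m" "V * U = 1\<^sub>m m"
    and dims: "(\<Sum>k<K. \<Sum>i<alpha k. msz k i) = m"
  shows "jordan_part U V K alpha msz k i q = U * blk_nil_pow K alpha msz k i q * V"
proof -
  have "blk_nil K alpha msz k i \<in> carrier_mat m m"
    unfolding blk_nil_def by (rule block_layout_carrier[OF dims]) simp
  thus ?thesis
    by (simp add: jordan_part_def blk_nil_pow_0 blk_nil_pow_pos conj_pow_mat[OF UV])
qed

lemma jordan_part_carrier: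
  assumes "U \<in> carrier_mat m m" "V \<in> carrier_mat m m" "U * V = 1\<^sub>m m" "V * U = 1\<^sub>m m"
    and "(\<Sum>k<K. \<Sum>i<alpha k. msz k i) = m"
  shows "jordan_part U V K alpha msz k i q \<in> carrier_mat m m"
  unfolding jordan_part_eq_conj_blk_nil_pow[OF assms] using assms blk_nil_pow_carrier[OF assms(5)]
  by (meson mult_carrier_mat)

lemma pow_jordan_similar:
  assumes UV: "U \<in> carrier_mat m m" "V \<in> carrier_mat m m" "U * V = 1\<^sub>m m" "V * U = 1\<^sub>m m"
    and dims: "(\<Sum>k<K. \<Sum>i<alpha k. msz k i) = m"
  shows "(U * jordan_form K lam alpha msz * V) ^\<^sub>m e = mat_lincomb m m (jordan_indices K alpha msz)
     (\<lambda>(k, i, q). of_nat (e choose q) * lam k ^ (e - q)) (\<lambda>(k, i, q). jordan_part U V K alpha msz k i q)"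
proof -
  let ?T = "jordan_indices K alpha msz" and ?c = "\<lambda>(k, i, q). of_nat (e choose q) * lam k ^ (e - q)"
  have "jordan_form K lam alpha msz \<in> carrier_mat m m"
    unfolding jordan_form_def by (rule block_layout_carrier[OF dims]) simp
  hence "(U * jordan_form K lam alpha msz * V) ^\<^sub>m e = U * jordan_form K lam alpha msz ^\<^sub>m e * V"
    by (rule conj_pow_mat[OF UV])
  also have "\<dots> = U * mat_lincomb m m ?T ?c (\<lambda>(k, i, q). blk_nil_pow K alpha msz k i q) * V"
    by (simp only: jordan_form_pow[OF dims])
  also have "\<dots> = mat_lincomb m m ?T ?c (\<lambda>t. U * (case t of (k, i, q) \<Rightarrow> blk_nil_pow K alpha msz k i q) * V)"
    using UV by (simp add: mult_mat_lincomb_left mult_mat_lincomb_right blk_nil_pow_carrier[OF dims] split: prod.split)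
  also have "\<dots> = mat_lincomb m m ?T ?c (\<lambda>(k, i, q). jordan_part U V K alpha msz k i q)"
    by (simp add: jordan_part_eq_conj_blk_nil_pow[OF UV dims] case_prod_beta')
  finally show ?thesis .
qed

section \<open>Termwise differentiation of the power series\<close>

fun ffact :: "nat \<Rightarrow> nat \<Rightarrow> nat" where
  "ffact n 0 = 1"
| "ffact n (Suc q) = ffact n q * (n - q)"

lemma ffact_eq_0: "n < q \<Longrightarrow> ffact n q = 0"
proof (induction q)
  case (Suc q)
  thus ?case by (cases "n < q") auto
qed simp

lemma ffact_eq_binomial_fact: "ffact n q = (n choose q) * fact q"
proof (induction q)
  case (Suc q)
  have "(n - q) * (n choose q) = Suc q * (n choose Suc q)"
    using binomial_absorb_comp[of n q] binomial_absorption[of q n] by simp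
  with Suc show ?case by (simp add: algebra_simps)
qed simp

lemma summable_ffact_power: "norm (x::real) < 1 \<Longrightarrow> summable (\<lambda>n. real (ffact (n + q) q) * x ^ n)"
proof (induction q arbitrary: x)
  case 0
  thus ?case by (simp add: summable_geometric)
next
  case (Suc q)
  have "summable (\<lambda>n. diffs (\<lambda>n. real (ffact (n + q) q)) n * x ^ n)"
    by (rule termdiff_converges[of x 1]) (use Suc in auto)
  moreover have "diffs (\<lambda>n. real (ffact (n + q) q)) n = real (ffact (n + Suc q) (Suc q))" for n
    by (simp add: diffs_def algebra_simps)
  ultimately show ?case by simp
qed

lemma ffact_power_bound:
  assumes "0 \<le> t" "t < \<rho>"
  shows "\<exists>C\<ge>0. \<forall>n. real (ffact n q) * t ^ (n - q) \<le> C * \<rho> ^ n"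
proof -
  have \<rho>: "\<rho> > 0" using assms by simp
  define x where "x = t / \<rho>"
  have x: "0 \<le> x" "x < 1" using assms \<rho> by (auto simp: x_def)
  have "(\<lambda>n. real (ffact (n + q) q) * x ^ n) \<longlonglongrightarrow> 0"
    using x by (intro summable_LIMSEQ_zero summable_ffact_power) simp
  hence "Bseq (\<lambda>n. real (ffact (n + q) q) * x ^ n)"
    by (rule convergent_imp_Bseq[OF convergentI])
  then obtain B where B: "B > 0" "\<And>n. norm (real (ffact (n + q) q) * x ^ n) \<le> B"
    by (auto elim: BseqE)
  have "real (ffact n q) * t ^ (n - q) \<le> B / \<rho> ^ q * \<rho> ^ n" for n
  proof (cases "n < q")
    case True
    thus ?thesis using B \<rho> by (simp add: ffact_eq_0)
  next
    case False
    then obtain j where n: "n = j + q" by (metis add.commute le_add_diff_inverse not_less)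
    have "real (ffact n q) * t ^ (n - q) = (real (ffact (j + q) q) * x ^ j) * \<rho> ^ j"
      using \<rho> by (simp add: n x_def power_divide)
    also have "\<dots> \<le> B * \<rho> ^ j"
      using B(2)[of j] x \<rho> by (intro mult_right_mono) auto
    also have "\<dots> = B / \<rho> ^ q * \<rho> ^ n"
      using \<rho> by (simp add: n power_add)
    finally show ?thesis .
  qed
  with B \<rho> show ?thesis by (intro exI[of _ "B / \<rho> ^ q"]) auto
qed

definition polydisc :: "nat \<Rightarrow> (nat \<Rightarrow> ereal) \<Rightarrow> (nat \<Rightarrow> complex) set" where
  "polydisc r R = {z. \<forall>l<r. ereal (cmod (z l)) < R l}"

lemma polydisc_update_ball:
  assumes z: "z \<in> polydisc r R" and l: "l < r"
  obtains s where "cmod (z l) < s" "ereal s < R l"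
    "\<And>w. w \<in> ball (z l) (s - cmod (z l)) \<Longrightarrow> cmod w < s \<and> z(l := w) \<in> polydisc r R"
proof -
  have "ereal (cmod (z l)) < R l" using z l unfolding polydisc_def by auto
  then obtain s where s: "ereal (cmod (z l)) < ereal s" "ereal s < R l"
    using ereal_dense2 by blast
  have "cmod w < s \<and> z(l := w) \<in> polydisc r R" if w: "w \<in> ball (z l) (s - cmod (z l))" for w
  proof -
    have "cmod w \<le> cmod (z l) + cmod (w - z l)"
      by (metis add.commute diff_add_cancel norm_triangle_ineq)
    also have "cmod (w - z l) < s - cmod (z l)"
      using w by (simp add: dist_norm norm_minus_commute)
    finally have "cmod w < s" by simp
    moreover from this have "ereal (cmod w) < ereal s" by simp
    hence "ereal (cmod w) < R l" using s(2) by (rule order.strict_trans)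
    ultimately show ?thesis using z unfolding polydisc_def by auto
  qed
  with s that show ?thesis by auto
qed

text \<open>\<open>ffact e q * z ^ (e - q)\<close> is the \<open>q\<close>-th derivative of \<open>z ^ e\<close>; the truncated subtraction is
  harmless because \<open>ffact e q = 0\<close> for \<open>e < q\<close>.\<close>
definition pser_deriv_term ::
    "((nat \<Rightarrow> nat) \<Rightarrow> complex) \<Rightarrow> nat \<Rightarrow> (nat \<Rightarrow> nat) \<Rightarrow> (nat \<Rightarrow> complex) \<Rightarrow> (nat \<Rightarrow> nat) \<Rightarrow> complex" where
  "pser_deriv_term a r q z e = a e * (\<Prod>l<r. of_nat (ffact (e l) (q l)) * z l ^ (e l - q l))"

definition pser_deriv :: "((nat \<Rightarrow> nat) \<Rightarrow> complex) \<Rightarrow> nat \<Rightarrow> (nat \<Rightarrow> nat) \<Rightarrow> (nat \<Rightarrow> complex) \<Rightarrow> complex" where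
  "pser_deriv a r q z = (\<Sum>\<^sub>\<infinity>e\<in>midx r. pser_deriv_term a r q z e)"

lemma pser_eq_pser_deriv_0: "pser a r = pser_deriv a r (\<lambda>_. 0)"
  by (auto simp: pser_def pser_deriv_def pser_deriv_term_def)

lemma norm_pser_deriv_term:
  "norm (pser_deriv_term a r q z e) = norm (a e) * (\<Prod>l<r. real (ffact (e l) (q l)) * norm (z l) ^ (e l - q l))"
  by (simp add: pser_deriv_term_def norm_mult prod_norm[symmetric] norm_power)

lemma bij_betw_nat_midx:
  assumes "r \<ge> 1"
  obtains g where "bij_betw g (UNIV :: nat set) (midx r)"
proof -
  define f where "f = (\<lambda>xs :: nat list. \<lambda>l. if l < length xs then xs ! l else 0)"
  have "midx r \<subseteq> range f"
  proof
    fix e assume "e \<in> midx r"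
    hence "e = f (map e [0..<r])" by (auto simp: f_def midx_def fun_eq_iff)
    thus "e \<in> range f" by blast
  qed
  hence "countable (midx r)" by (rule countable_subset) simp
  moreover have "infinite (midx r)"
  proof -
    have "inj (\<lambda>n :: nat. \<lambda>l :: nat. if l = 0 then n else 0)" by (auto simp: inj_def fun_eq_iff)
    moreover have "range (\<lambda>n :: nat. \<lambda>l :: nat. if l = 0 then n else 0) \<subseteq> midx r"
      using assms by (auto simp: midx_def)
    ultimately show ?thesis by (meson infinite_super range_inj_infinite)
  qed
  ultimately obtain e where "bij_betw e (midx r) (UNIV :: nat set)" by (rule countableE_infinite)
  thus ?thesis by (rule that[OF bij_betw_inv_into])
qed

lemma
  fixes f :: "_ \<Rightarrow> 'a::banach"
  assumes g: "bij_betw g UNIV A" and s: "(\<lambda>x. norm (f x)) summable_on A"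
  shows summable_norm_bij_betw: "summable (\<lambda>n. norm (f (g n)))"
    and infsum_eq_suminf_bij_betw: "infsum f A = (\<Sum>n. f (g n))"
proof -
  have "(\<lambda>n. norm (f (g n))) summable_on UNIV"
    using summable_on_reindex_bij_betw[OF g, of "\<lambda>x. norm (f x)"] s by simp
  thus sn: "summable (\<lambda>n. norm (f (g n)))" using summable_on_UNIV_nonneg_real_iff by auto
  have "((\<lambda>n. f (g n)) has_sum (\<Sum>n. f (g n))) UNIV"
    by (rule norm_summable_imp_has_sum[OF sn summable_sums[OF summable_norm_cancel[OF sn]]])
  hence "infsum (\<lambda>n. f (g n)) UNIV = (\<Sum>n. f (g n))" by (rule infsumI)
  thus "infsum f A = (\<Sum>n. f (g n))" using infsum_reindex_bij_betw[OF g, of f] by simp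
qed

lemma pser_deriv_term_has_field_derivative:
  assumes l: "l < r"
  shows "((\<lambda>w. pser_deriv_term a r q (z(l := w)) e) has_field_derivative
           pser_deriv_term a r (q(l := Suc (q l))) (z(l := w0)) e) (at w0 within S)"
proof -
  define c where "c = (of_nat (ffact (e l) (q l)) :: complex)"
  define n where "n = e l - q l"
  define P where "P = (\<Prod>j\<in>{..<r} - {l}. of_nat (ffact (e j) (q j)) * z j ^ (e j - q j) :: complex)"
  have split: "(\<Prod>j<r. h j) = h l * (\<Prod>j\<in>{..<r} - {l}. h j)" for h :: "nat \<Rightarrow> complex"
    by (rule prod.remove) (use l in auto)
  have P: "(\<Prod>j\<in>{..<r} - {l}. of_nat (ffact (e j) (q' j)) * (z(l := w)) j ^ (e j - q' j)) = P"
    if "\<And>j. j \<noteq> l \<Longrightarrow> q' j = q j" for q' w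
    unfolding P_def using that by (intro prod.cong) auto
  have "pser_deriv_term a r q (z(l := w)) e = a e * (c * w ^ n) * P" for w
    unfolding pser_deriv_term_def split P[of q, OF refl] by (simp add: c_def n_def mult.assoc)
  moreover have "pser_deriv_term a r (q(l := Suc (q l))) (z(l := w0)) e
      = a e * (c * (of_nat n * w0 ^ (n - 1))) * P"
  proof -
    have "(\<Prod>j\<in>{..<r} - {l}. of_nat (ffact (e j) ((q(l := Suc (q l))) j)) *
        (z(l := w0)) j ^ (e j - (q(l := Suc (q l))) j)) = P"
      by (rule P) simp
    moreover have "of_nat (ffact (e l) (Suc (q l))) = c * of_nat n" "e l - Suc (q l) = n - 1"
      by (simp_all add: c_def n_def)
    ultimately show ?thesis
      unfolding pser_deriv_term_def split by simp
  qed
  moreover have "((\<lambda>w. a e * (c * w ^ n) * P) has_field_derivative a e * (c * (of_nat n * w0 ^ (n - 1))) * P)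
      (at w0 within S)"
    using DERIV_power[OF DERIV_ident, of n w0 S] by (intro DERIV_cmult_right DERIV_cmult) simp
  ultimately show ?thesis by simp
qed

lemma norm_pser_deriv_term_mono:
  assumes "\<And>l. l < r \<Longrightarrow> norm (z l) \<le> norm (z' l)"
  shows "norm (pser_deriv_term a r q z e) \<le> norm (pser_deriv_term a r q z' e)"
  unfolding norm_pser_deriv_term
proof (intro mult_left_mono prod_mono conjI)
  fix l assume "l \<in> {..<r}"
  with assms show "norm (z l) ^ (e l - q l) \<le> norm (z' l) ^ (e l - q l)"
    by (intro power_mono) auto
qed simp_all

locale pser_polydisc =
  fixes a :: "(nat \<Rightarrow> nat) \<Rightarrow> complex" and r :: nat and R :: "nat \<Rightarrow> ereal"
  assumes r_ge_1: "r \<ge> 1"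
    and summable_pser: "\<And>z. z \<in> polydisc r R \<Longrightarrow> (\<lambda>e. a e * (\<Prod>l<r. z l ^ e l)) summable_on midx r"
begin

text \<open>Domination by the absolutely convergent series at a point with real coordinates
  \<open>\<rho> l\<close> strictly between \<open>\<bar>z l\<bar>\<close> and \<open>R l\<close>.\<close>
lemma abs_summable_pser_deriv_term:
  assumes z: "z \<in> polydisc r R"
  shows "(\<lambda>e. norm (pser_deriv_term a r q z e)) summable_on midx r"
proof -
  have "\<exists>\<rho>. cmod (z l) < \<rho> \<and> ereal \<rho> < R l" if "l < r" for l
    using z that ereal_dense2[of "ereal (cmod (z l))" "R l"] by (force simp: polydisc_def)
  then obtain \<rho> where \<rho>: "\<And>l. l < r \<Longrightarrow> cmod (z l) < \<rho> l \<and> ereal (\<rho> l) < R l" by metis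
  hence "\<exists>C\<ge>0. \<forall>n. real (ffact n (q l)) * cmod (z l) ^ (n - q l) \<le> C * \<rho> l ^ n" if "l < r" for l
    using that by (intro ffact_power_bound) auto
  then obtain C where C: "\<And>l n. l < r \<Longrightarrow> C l \<ge> 0 \<and> real (ffact n (q l)) * cmod (z l) ^ (n - q l) \<le> C l * \<rho> l ^ n"
    by metis
  have \<rho>_pos: "\<rho> l > 0" if "l < r" for l
    using \<rho>[OF that] by (meson norm_ge_zero order_le_less_trans)
  have "(\<lambda>l. complex_of_real (\<rho> l)) \<in> polydisc r R"
    using \<rho> \<rho>_pos by (auto simp: polydisc_def abs_of_pos)
  hence "(\<lambda>e. norm (a e * (\<Prod>l<r. complex_of_real (\<rho> l) ^ e l))) summable_on midx r"
    using summable_pser by (simp add: summable_on_iff_abs_summable_on_complex)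
  moreover have "norm (a e * (\<Prod>l<r. complex_of_real (\<rho> l) ^ e l)) = norm (a e) * (\<Prod>l<r. \<rho> l ^ e l)" for e
  proof -
    have "(\<Prod>l<r. \<bar>\<rho> l\<bar> ^ e l) = (\<Prod>l<r. \<rho> l ^ e l)"
      using \<rho>_pos by (intro prod.cong) (auto simp: abs_of_pos)
    thus ?thesis by (simp add: norm_mult prod_norm[symmetric] norm_power)
  qed
  ultimately have "(\<lambda>e. (\<Prod>l<r. C l) * (norm (a e) * (\<Prod>l<r. \<rho> l ^ e l))) summable_on midx r"
    by (intro summable_on_cmult_right) simp
  thus ?thesis
  proof (rule summable_on_comparison_test)
    fix e
    have "(\<Prod>l<r. real (ffact (e l) (q l)) * cmod (z l) ^ (e l - q l)) \<le> (\<Prod>l<r. C l * \<rho> l ^ e l)"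
      using C by (intro prod_mono) auto
    also have "\<dots> = (\<Prod>l<r. C l) * (\<Prod>l<r. \<rho> l ^ e l)"
      by (rule prod.distrib)
    finally have prod_le: "(\<Prod>l<r. real (ffact (e l) (q l)) * cmod (z l) ^ (e l - q l)) \<le> (\<Prod>l<r. C l) * (\<Prod>l<r. \<rho> l ^ e l)" .
    show "norm (pser_deriv_term a r q z e) \<le> (\<Prod>l<r. C l) * (norm (a e) * (\<Prod>l<r. \<rho> l ^ e l))"
      using mult_left_mono[OF prod_le norm_ge_zero[of "a e"]] by (simp add: norm_pser_deriv_term mult_ac)
  qed simp
qed

lemma has_sum_pser_deriv:
  "z \<in> polydisc r R \<Longrightarrow> (pser_deriv_term a r q z has_sum pser_deriv a r q z) (midx r)"
  unfolding pser_deriv_def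
  by (rule has_sum_infsum[OF abs_summable_summable[OF abs_summable_pser_deriv_term]])

text \<open>The termwise differentiation theorem of the library is about series indexed by \<open>nat\<close>, hence
  the enumeration \<open>g\<close> of \<open>midx r\<close>. Uniform convergence on a small disc around \<open>z l\<close> is
  Weierstrass' M-test, with the majorant taken at the point \<open>zs\<close> whose \<open>l\<close>-th coordinate is \<open>s\<close>.\<close>
lemma pser_deriv_has_field_derivative:
  assumes z: "z \<in> polydisc r R" and l: "l < r"
  shows "((\<lambda>w. pser_deriv a r q (z(l := w))) has_field_derivative pser_deriv a r (q(l := Suc (q l))) z) (at (z l))"
proof -
  obtain s where s: "cmod (z l) < s" "ereal s < R l"
    and B: "\<And>w. w \<in> ball (z l) (s - cmod (z l)) \<Longrightarrow> cmod w < s \<and> z(l := w) \<in> polydisc r R"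
    using polydisc_update_ball[OF z l] by blast
  define S where "S = ball (z l) (s - cmod (z l))"
  define zs where "zs = z(l := complex_of_real s)"
  have zlS: "z l \<in> S" using s by (simp add: S_def)
  have "s > 0" using s(1) by (meson norm_ge_zero order_le_less_trans)
  hence zs: "zs \<in> polydisc r R" using z s by (auto simp: polydisc_def zs_def)
  obtain g where g: "bij_betw g (UNIV :: nat set) (midx r)" using bij_betw_nat_midx[OF r_ge_1] by blast
  define q' where "q' = q(l := Suc (q l))"
  define f where "f = (\<lambda>n w. pser_deriv_term a r q (z(l := w)) (g n))"
  define f' where "f' = (\<lambda>n w. pser_deriv_term a r q' (z(l := w)) (g n))"
  have D: "((\<lambda>w. \<Sum>n. f n w) has_field_derivative (\<Sum>n. f' n (z l))) (at (z l))"
  proof (rule has_field_derivative_series'(2)[of S f f' "z l"])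
    show "(f n has_field_derivative f' n w) (at w within S)" for n w
      unfolding f_def f'_def q'_def using l by (rule pser_deriv_term_has_field_derivative)
    have "norm (f' n w) \<le> norm (pser_deriv_term a r q' zs (g n))" if "w \<in> S" for n w
      unfolding f'_def using B[of w] that \<open>s > 0\<close>
      by (intro norm_pser_deriv_term_mono) (auto simp: S_def zs_def)
    thus "uniformly_convergent_on S (\<lambda>n w. \<Sum>i<n. f' i w)"
      by (rule Weierstrass_m_test'[OF _ summable_norm_bij_betw[OF g abs_summable_pser_deriv_term[OF zs]]])
    show "summable (\<lambda>n. f n (z l))"
      unfolding f_def using summable_norm_bij_betw[OF g abs_summable_pser_deriv_term[OF z]]
      by (simp add: summable_norm_cancel)
  qed (use zlS in \<open>auto simp: S_def\<close>)
  have D_eq: "(\<Sum>n. f' n (z l)) = pser_deriv a r q' z"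
    unfolding f'_def pser_deriv_def using infsum_eq_suminf_bij_betw[OF g abs_summable_pser_deriv_term[OF z]]
    by simp
  have f_eq: "(\<Sum>n. f n w) = pser_deriv a r q (z(l := w))" if "w \<in> S" for w
    unfolding f_def pser_deriv_def using B[of w] that
    by (simp add: S_def infsum_eq_suminf_bij_betw[OF g abs_summable_pser_deriv_term])
  show ?thesis
    unfolding q'_def[symmetric] D_eq[symmetric]
    by (intro has_field_derivative_transform_within_open[OF D _ zlS f_eq]) (simp_all add: S_def)
qed

lemma pdiff_pser_deriv:
  assumes h: "\<And>z. z \<in> polydisc r R \<Longrightarrow> h z = pser_deriv a r q z"
    and z: "z \<in> polydisc r R" and l: "l < r"
  shows "pdiff l h z = pser_deriv a r (q(l := Suc (q l))) z"
proof -
  obtain s where s: "cmod (z l) < s"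
    and B: "\<And>w. w \<in> ball (z l) (s - cmod (z l)) \<Longrightarrow> cmod w < s \<and> z(l := w) \<in> polydisc r R"
    using polydisc_update_ball[OF z l] by blast
  have "eventually (\<lambda>w. w \<in> ball (z l) (s - cmod (z l))) (nhds (z l))"
    using s by (intro eventually_nhds_in_open) auto
  hence "eventually (\<lambda>w. h (z(l := w)) = pser_deriv a r q (z(l := w))) (nhds (z l))"
    by (rule eventually_mono) (use B h in auto)
  hence "pdiff l h z = deriv (\<lambda>w. pser_deriv a r q (z(l := w))) (z l)"
    unfolding pdiff_def by (rule deriv_cong_ev) simp
  also have "\<dots> = pser_deriv a r (q(l := Suc (q l))) z"
    by (rule DERIV_imp_deriv[OF pser_deriv_has_field_derivative[OF z l]])
  finally show ?thesis .
qed

lemma pdiffn_pser_deriv: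
  assumes h: "\<And>z. z \<in> polydisc r R \<Longrightarrow> h z = pser_deriv a r q z" and l: "l < r"
  shows "z \<in> polydisc r R \<Longrightarrow> pdiffn l n h z = pser_deriv a r (q(l := q l + n)) z"
proof (induction n arbitrary: z)
  case 0
  thus ?case using h by (simp add: pdiffn_def)
next
  case (Suc n)
  have "pdiffn l (Suc n) h z = pdiff l (pdiffn l n h) z" by (simp add: pdiffn_def)
  also have "\<dots> = pser_deriv a r ((q(l := q l + n))(l := Suc ((q(l := q l + n)) l))) z"
    by (rule pdiff_pser_deriv[OF Suc.IH Suc.prems l])
  also have "(q(l := q l + n))(l := Suc ((q(l := q l + n)) l)) = q(l := q l + Suc n)"
    by simp
  finally show ?case .
qed

lemma foldr_pdiffn_pser_deriv:
  assumes "distinct L" "set L \<subseteq> {..<r}" and "z \<in> polydisc r R"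
  shows "foldr (\<lambda>l h. pdiffn l (q l) h) L (pser_deriv a r q0) z
       = pser_deriv a r (\<lambda>j. if j \<in> set L then q0 j + q j else q0 j) z"
  using assms
proof (induction L arbitrary: z)
  case (Cons x L)
  let ?q = "\<lambda>j. if j \<in> set L then q0 j + q j else q0 j"
  have "foldr (\<lambda>l h. pdiffn l (q l) h) (x # L) (pser_deriv a r q0) z
      = pdiffn x (q x) (foldr (\<lambda>l h. pdiffn l (q l) h) L (pser_deriv a r q0)) z"
    by simp
  also have "\<dots> = pser_deriv a r (?q(x := ?q x + q x)) z"
    using Cons by (intro pdiffn_pser_deriv) auto
  also have "?q(x := ?q x + q x) = (\<lambda>j. if j \<in> set (x # L) then q0 j + q j else q0 j)"
    using Cons.prems by (auto simp: fun_eq_iff)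
  finally show ?case .
qed simp

lemma mixed_deriv_pser:
  assumes "z \<in> polydisc r R" and "\<And>j. j \<ge> r \<Longrightarrow> q j = 0"
  shows "mixed_deriv r q (pser a r) z = pser_deriv a r q z"
proof -
  have "mixed_deriv r q (pser a r) z = pser_deriv a r (\<lambda>j. if j \<in> set [0..<r] then 0 + q j else 0) z"
    unfolding mixed_deriv_def pser_eq_pser_deriv_0 by (rule foldr_pdiffn_pser_deriv[OF _ _ assms(1)]) auto
  also have "(\<lambda>j. if j \<in> set [0..<r] then 0 + q j else 0) = q"
    using assms(2) by (auto simp: fun_eq_iff)
  finally show ?thesis .
qed

lemma has_sum_taylor_coeff:
  assumes z: "z \<in> polydisc r R" and q: "\<And>j. j \<ge> r \<Longrightarrow> q j = 0"
  shows "((\<lambda>e. a e * (\<Prod>l<r. of_nat (e l choose q l) * z l ^ (e l - q l))) has_sum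
     (mixed_deriv r q (pser a r) z / (\<Prod>l<r. of_nat (fact (q l))))) (midx r)"
proof -
  define P where "P = (\<Prod>l<r. of_nat (fact (q l)) :: complex)"
  have "P \<noteq> 0" by (simp add: P_def)
  hence "pser_deriv_term a r q z e / P = a e * (\<Prod>l<r. of_nat (e l choose q l) * z l ^ (e l - q l))" for e
    by (simp add: pser_deriv_term_def P_def ffact_eq_binomial_fact prod.distrib[symmetric] field_simps)
  moreover have "((\<lambda>e. pser_deriv_term a r q z e / P) has_sum (pser_deriv a r q z / P)) (midx r)"
    by (rule has_sum_divide_const[OF has_sum_pser_deriv[OF z]])
  ultimately show ?thesis
    using mixed_deriv_pser[OF z q] by (simp add: P_def)
qed

end

lemma has_sum_sum:
  fixes f :: "'i \<Rightarrow> 'a \<Rightarrow> 'b::topological_comm_monoid_add"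
  assumes "finite I" "\<And>i. i \<in> I \<Longrightarrow> (f i has_sum s i) A"
  shows "((\<lambda>x. \<Sum>i\<in>I. f i x) has_sum (\<Sum>i\<in>I. s i)) A"
  using assms by (induction I rule: finite_induct) (auto intro: has_sum_add)

section \<open>Power series of several Jordan matrices\<close>

context pser_polydisc
begin

lemma has_sum_ord_prod_jordan_pow:
  fixes U V X :: "nat \<Rightarrow> complex mat"
  assumes U: "\<And>l. l < r \<Longrightarrow> U l \<in> carrier_mat m m \<and> V l \<in> carrier_mat m m
                 \<and> U l * V l = 1\<^sub>m m \<and> V l * U l = 1\<^sub>m m"
    and dims: "\<And>l. l < r \<Longrightarrow> (\<Sum>k<K l. \<Sum>i<alpha l k. msz l k i) = m"
    and eig: "\<And>l k. l < r \<Longrightarrow> k < K l \<Longrightarrow> ereal (cmod (lam l k)) < R l"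
    and X: "\<And>l. l < r \<Longrightarrow> X l = U l * jordan_form (K l) (lam l) (alpha l) (msz l) * V l"
    and ps: "p < m" "s < m"
  shows "((\<lambda>e. (a e \<cdot>\<^sub>m ord_prod m r (\<lambda>l. X l ^\<^sub>m e l)) $$ (p, s)) has_sum
    (\<Sum>\<tau>\<in>Pi_dflt {..<r} (\<lambda>l. jordan_indices (K l) (alpha l) (msz l)) (0, 0, 0).
       mixed_deriv r (\<lambda>l. snd (snd (\<tau> l))) (pser a r) (\<lambda>l. lam l (fst (\<tau> l)))
         / (\<Prod>l<r. of_nat (fact (snd (snd (\<tau> l)))))
       * ord_prod m r (\<lambda>l. case \<tau> l of (k, i, q) \<Rightarrow> jordan_part (U l) (V l) (K l) (alpha l) (msz l) k i q) $$ (p, s)))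
    (midx r)"
proof -
  let ?T = "\<lambda>l. jordan_indices (K l) (alpha l) (msz l)"
  let ?c = "\<lambda>l n (k, i, q). of_nat (n choose q) * lam l k ^ (n - q)"
  let ?Q = "\<lambda>l (k, i, q). jordan_part (U l) (V l) (K l) (alpha l) (msz l) k i q"
  have Q: "?Q l t \<in> carrier_mat m m" if "l < r" for l t
    using U[OF that] dims[OF that] by (auto simp: jordan_part_carrier split: prod.split)
  have "ord_prod m r (\<lambda>l. X l ^\<^sub>m e l) = ord_prod m r (\<lambda>l. mat_lincomb m m (?T l) (?c l (e l)) (?Q l))" for e
    using U dims X by (intro ord_prod_cong) (simp add: pow_jordan_similar)
  also have "\<dots> e = mat_lincomb m m (Pi_dflt {..<r} ?T (0, 0, 0)) (\<lambda>\<tau>. \<Prod>l<r. ?c l (e l) (\<tau> l))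
      (\<lambda>\<tau>. ord_prod m r (\<lambda>l. ?Q l (\<tau> l)))" for e
    using Q by (intro ord_prod_mat_lincomb) auto
  finally have entry: "(a e \<cdot>\<^sub>m ord_prod m r (\<lambda>l. X l ^\<^sub>m e l)) $$ (p, s)
      = (\<Sum>\<tau>\<in>Pi_dflt {..<r} ?T (0, 0, 0). a e * (\<Prod>l<r. ?c l (e l) (\<tau> l)) * ord_prod m r (\<lambda>l. ?Q l (\<tau> l)) $$ (p, s))" for e
    using ps by (simp add: sum_distrib_left mult.assoc)
  show ?thesis
    unfolding entry
  proof (intro has_sum_sum has_sum_cmult_left)
    show "finite (Pi_dflt {..<r} ?T (0, 0, 0))" by (simp add: finite_Pi_dflt)
    fix \<tau> assume \<tau>: "\<tau> \<in> Pi_dflt {..<r} ?T (0, 0, 0)"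
    hence "(\<lambda>l. lam l (fst (\<tau> l))) \<in> polydisc r R"
      using eig by (force simp: polydisc_def Pi_dflt_def jordan_indices_def)
    moreover have "snd (snd (\<tau> j)) = 0" if "j \<ge> r" for j
      using \<tau> that by (simp add: Pi_dflt_def)
    ultimately have "((\<lambda>e. a e * (\<Prod>l<r. of_nat (e l choose snd (snd (\<tau> l))) * lam l (fst (\<tau> l)) ^ (e l - snd (snd (\<tau> l))))) has_sum
        mixed_deriv r (\<lambda>l. snd (snd (\<tau> l))) (pser a r) (\<lambda>l. lam l (fst (\<tau> l)))
          / (\<Prod>l<r. of_nat (fact (snd (snd (\<tau> l)))))) (midx r)"
      by (rule has_sum_taylor_coeff)
    thus "((\<lambda>e. a e * (\<Prod>l<r. ?c l (e l) (\<tau> l))) has_sum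
        mixed_deriv r (\<lambda>l. snd (snd (\<tau> l))) (pser a r) (\<lambda>l. lam l (fst (\<tau> l)))
          / (\<Prod>l<r. of_nat (fact (snd (snd (\<tau> l)))))) (midx r)"
      by (simp add: case_prod_beta')
  qed
qed

end

theorem mainTheorem11:
  fixes r m :: nat
    and a :: "(nat \<Rightarrow> nat) \<Rightarrow> complex"
    and R :: "nat \<Rightarrow> ereal"
    and X U Uinv :: "nat \<Rightarrow> complex mat"
    and K :: "nat \<Rightarrow> nat"
    and lam :: "nat \<Rightarrow> nat \<Rightarrow> complex"
    and alpha :: "nat \<Rightarrow> nat \<Rightarrow> nat"
    and msz :: "nat \<Rightarrow> nat \<Rightarrow> nat \<Rightarrow> nat"
  defines "Q \<equiv> \<lambda>l k i q. if q = 0 then U l * blk_id (K l) (alpha l) (msz l) k i * Uinv l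
                     else (U l * blk_nil (K l) (alpha l) (msz l) k i * Uinv l) ^\<^sub>m q"
  assumes r: "r \<ge> 1"
    and conv: "\<And>z. (\<forall>l<r. ereal (cmod (z l)) < R l) \<Longrightarrow>
                 (\<lambda>e. a e * (\<Prod>l<r. z l ^ e l)) summable_on midx r"
    and U: "\<And>l. l < r \<Longrightarrow> U l \<in> carrier_mat m m \<and> Uinv l \<in> carrier_mat m m
                 \<and> U l * Uinv l = 1\<^sub>m m \<and> Uinv l * U l = 1\<^sub>m m"
    and dims: "\<And>l. l < r \<Longrightarrow> (\<Sum>k<K l. \<Sum>i<alpha l k. msz l k i) = m"
    and distinct: "\<And>l. l < r \<Longrightarrow> inj_on (lam l) {..<K l}"
    and geo: "\<And>l k. l < r \<Longrightarrow> k < K l \<Longrightarrow> alpha l k \<ge> 1"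
    and sizes: "\<And>l k i. l < r \<Longrightarrow> k < K l \<Longrightarrow> i < alpha l k \<Longrightarrow> msz l k i \<ge> 1"
    and eig: "\<And>l k. l < r \<Longrightarrow> k < K l \<Longrightarrow> ereal (cmod (lam l k)) < R l"
    and X: "\<And>l. l < r \<Longrightarrow> X l = U l * jordan_form (K l) (lam l) (alpha l) (msz l) * Uinv l"
  shows "\<forall>p<m. \<forall>s<m.
    ((\<lambda>e. (a e \<cdot>\<^sub>m ord_prod m r (\<lambda>l. X l ^\<^sub>m e l)) $$ (p, s)) has_sum
      (\<Sum>(k, i, q) \<in> {(k, i, q). (\<forall>l<r. k l < K l \<and> i l < alpha l (k l) \<and> q l < msz l (k l) (i l))
                                 \<and> (\<forall>l\<ge>r. k l = 0 \<and> i l = 0 \<and> q l = 0)}.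
         (mixed_deriv r q (pser a r) (\<lambda>l. lam l (k l)) / (\<Prod>l<r. of_nat (fact (q l))))
         * ord_prod m r (\<lambda>l. Q l (k l) (i l) (q l)) $$ (p, s)))
    (midx r)"
proof (intro allI impI)
  fix p s assume ps: "p < m" "s < m"
  interpret pser_polydisc a r R
    using r conv by unfold_locales (auto simp: polydisc_def)
  let ?I = "{(k, i, q). (\<forall>l<r. k l < K l \<and> i l < alpha l (k l) \<and> q l < msz l (k l) (i l))
                        \<and> (\<forall>l\<ge>r. k l = 0 \<and> i l = 0 \<and> q l = 0)}"
  define F where "F = (\<lambda>(k, i, q). (mixed_deriv r q (pser a r) (\<lambda>l. lam l (k l)) / (\<Prod>l<r. of_nat (fact (q l))))
         * ord_prod m r (\<lambda>l. Q l (k l) (i l) (q l)) $$ (p, s))"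
  have "bij_betw (\<lambda>\<tau>. (\<lambda>l. fst (\<tau> l), \<lambda>l. fst (snd (\<tau> l)), \<lambda>l. snd (snd (\<tau> l))))
      (Pi_dflt {..<r} (\<lambda>l. jordan_indices (K l) (alpha l) (msz l)) (0, 0, 0)) ?I"
    by (rule bij_betw_byWitness[where f' = "\<lambda>(k, i, q) l. (k l, i l, q l)"])
      (auto simp: Pi_dflt_def mem_jordan_indices)
  from sum.reindex_bij_betw[OF this, of F, symmetric] has_sum_ord_prod_jordan_pow[OF U dims eig X ps]
  show "((\<lambda>e. (a e \<cdot>\<^sub>m ord_prod m r (\<lambda>l. X l ^\<^sub>m e l)) $$ (p, s)) has_sum
      (\<Sum>(k, i, q) \<in> ?I. (mixed_deriv r q (pser a r) (\<lambda>l. lam l (k l)) / (\<Prod>l<r. of_nat (fact (q l))))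
         * ord_prod m r (\<lambda>l. Q l (k l) (i l) (q l)) $$ (p, s))) (midx r)"
    unfolding F_def[symmetric] by (simp add: F_def Q_def jordan_part_def) (simp add: case_prod_beta')
qed

end
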